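(* Let $u$ be the field with $u(x+\tfrac12,t+\tfrac12)=-1$ if both integers $x$ and $t$ are even and $u(x+\tfrac12,t+\tfrac12)=+1$ otherwise. For integers $x,t$ with $x+t$ even and $t>0$ set $b_1(x,t)=a_1(2x-1,2t-1,u)$ and $b_2(x,t)=a_2(2x-1,2t-1,u)$, and for $x+t$ odd set $b_1(x,t)=b_2(x,t)=0$. Then for all integers $x,t$ with $x+t$ even and $t>1$: $$b_1(x,t)=\tfrac12\big[b_1(x+1,t-1)+b_2(x+1,t-1)\big],\qquad b_2(x,t)=\tfrac12\big[3\,b_1(x-1,t-1)-b_2(x-1,t-1)\big].$$
   Context: A checker path is a finite sequence of integer points $s_0,s_1,\dots,s_t$ in the plane such that each vector $s_{k+1}-s_k$ equals $(1,1)$ or $(-1,1)$. A turn is a point $s_k$ with $0<k<t$ such that the vectors $s_{k+1}-s_k$ and $s_{k-1}-s_k$ are orthogonal; $\mathrm{turns}(s)$ is the number of turns. An edge is a segment joining two diagonally adjacent integer points (differing by $(\pm1,1)$) whose coordinate sums are even; every step $s_ks_{k+1}$ of a checker path starting at $(0,0)$ is an edge. A field is a map $u$ from edges to $\{-1,1\}$; for half-integers $x,t$, $u(x,t)$ denotes the value of $u$ on the edge with midpoint $(x,t)$. For integers $x$ and $t\ge 1$ define $$a(x,t,u):=2^{(1-t)/2}\, i\sum_s(-i)^{\mathrm{turns}(s)}u(s_0s_1)u(s_1s_2)\cdots u(s_{t-1}s_t),$$ the sum over all checker paths $s=(s_0,\dots,s_t)$ with $s_0=(0,0)$, $s_1=(1,1)$,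 $s_t=(x,t)$ (an empty sum is $0$). Let $a_1(x,t,u)$ and $a_2(x,t,u)$ be the real and imaginary parts of $a(x,t,u)$. *)

theory Defs
  imports Complex_Main
begin

type_synonym point = "int \<times> int"

text \<open>A field is represented by its values at edge midpoints: u (x, t) is the value on the
  edge with midpoint (x, t).\<close>
type_synonym field = "real \<times> real \<Rightarrow> real"

definition checker_path :: "point list \<Rightarrow> bool" where
  "checker_path s \<longleftrightarrow> s \<noteq> [] \<and>
     (\<forall>k. Suc k < length s \<longrightarrow>
        (fst (s ! Suc k) - fst (s ! k), snd (s ! Suc k) - snd (s ! k)) \<in> {(1, 1), (-1, 1)})"

definition is_turn :: "point list \<Rightarrow> nat \<Rightarrow> bool" where
  "is_turn s k \<longleftrightarrow> 0 < k \<and> Suc k < length s \<and>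
     (fst (s ! Suc k) - fst (s ! k)) * (fst (s ! (k - 1)) - fst (s ! k))
   + (snd (s ! Suc k) - snd (s ! k)) * (snd (s ! (k - 1)) - snd (s ! k)) = 0"

definition turns :: "point list \<Rightarrow> nat" where
  "turns s = card {k. is_turn s k}"

definition edge_val :: "field \<Rightarrow> point \<Rightarrow> point \<Rightarrow> real" where
  "edge_val u p q = u ((real_of_int (fst p) + real_of_int (fst q)) / 2,
                      (real_of_int (snd p) + real_of_int (snd q)) / 2)"

definition paths :: "int \<Rightarrow> int \<Rightarrow> point list set" where
  "paths x t = {s. checker_path s \<and> length s = nat t + 1 \<and>
      s ! 0 = (0, 0) \<and> s ! 1 = (1, 1) \<and> s ! nat t = (x, t)}"

definition amp :: "int \<Rightarrow> int \<Rightarrow> field \<Rightarrow> complex" where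
  "amp x t u = complex_of_real (2 powr ((1 - real_of_int t) / 2)) * \<i> *
     (\<Sum>s\<in>paths x t. (- \<i>) ^ turns s *
        complex_of_real (\<Prod>k<nat t. edge_val u (s ! k) (s ! Suc k)))"

definition a1 :: "int \<Rightarrow> int \<Rightarrow> field \<Rightarrow> real" where
  "a1 x t u = Re (amp x t u)"

definition a2 :: "int \<Rightarrow> int \<Rightarrow> field \<Rightarrow> real" where
  "a2 x t u = Im (amp x t u)"

definition u0 :: field where
  "u0 m = (if \<exists>x t :: int. even x \<and> even t \<and>
                 m = (real_of_int x + 1/2, real_of_int t + 1/2) then -1 else 1)"

definition b1 :: "int \<Rightarrow> int \<Rightarrow> real" where
  "b1 x t = (if even (x + t) \<and> t > 0 then a1 (2*x - 1) (2*t - 1) u0 else 0)"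

definition b2 :: "int \<Rightarrow> int \<Rightarrow> real" where
  "b2 x t = (if even (x + t) \<and> t > 0 then a2 (2*x - 1) (2*t - 1) u0 else 0)"

end

theory Submission
  imports Defs
begin

text \<open>
  Group the paths to (x, t) by the column x + d, d = 1 or d = -1, from which they enter (x, t).
  Appending a step multiplies the weight of a path by the value of the new edge, and by -i exactly
  when the step makes a turn; so the two partial sums obey a linear recurrence, by which the one
  with d = 1 is purely imaginary and the one with d = -1 is real. Up to the factor 2^((1-t)/2) they
  are therefore a1 and a2, and the recurrence becomes the Dirac equation
  a1(x, t+1) = u (a1 + a2)(x+1, t) / sqrt 2,  a2(x, t+1) = u (a2 - a1)(x-1, t) / sqrt 2.

  For the field u0, two applications of it express a1, a2 at odd sites y and odd time s + 2 through
  the values at time s. By induction on s, at odd sites a1(y, s) = a2(y, s) if y + s = 0 (mod 4) and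
  a1(y, s) = a1(y + 2, s) if y + s = 2 (mod 4). Substituting these identities into the two-step
  recurrence at (2x - 1, 2t - 1) gives the claim.
\<close>

lemma checker_path_snoc:
  "checker_path (s @ [q]) \<longleftrightarrow>
     s = [] \<or> checker_path s \<and> (fst q - fst (last s), snd q - snd (last s)) \<in> {(1, 1), (-1, 1)}"
proof (cases "s = []")
  case True
  then show ?thesis by (simp add: checker_path_def)
next
  case False
  have split_last: "(\<forall>k. Suc k < Suc (length s) \<longrightarrow> P k) \<longleftrightarrow>
      (\<forall>k. Suc k < length s \<longrightarrow> P k) \<and> P (length s - 1)" for P
    using False by (cases "length s") (auto simp: less_Suc_eq)
  show ?thesis
    using False unfolding checker_path_def length_append_singleton split_last
    by (simp add: nth_append last_conv_nth)
qed

lemma paths_last: "s \<in> paths x (int n) \<Longrightarrow> last s = (x, int n)"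
  by (auto simp: paths_def checker_path_def last_conv_nth)

lemma snoc_in_paths_iff:
  assumes "n \<ge> 1"
  shows "s @ [q] \<in> paths x (int (Suc n)) \<longleftrightarrow>
    q = (x, int n + 1) \<and> (\<exists>z. s \<in> paths z (int n) \<and> \<bar>x - z\<bar> = 1)"
proof
  assume path: "s @ [q] \<in> paths x (int (Suc n))"
  then have len: "length s = n + 1" and q: "q = (x, int n + 1)"
    by (auto simp: paths_def nth_append)
  then have "last s = s ! n" by (subst last_conv_nth) auto
  then have "checker_path s" "(x - fst (s ! n), int n + 1 - snd (s ! n)) \<in> {(1, 1), (-1, 1)}"
    using path len q by (auto simp: paths_def checker_path_snoc)
  then have "s \<in> paths (fst (s ! n)) (int n) \<and> \<bar>x - fst (s ! n)\<bar> = 1"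
    using path len assms by (cases "s ! n") (auto simp: paths_def nth_append)
  with q show "q = (x, int n + 1) \<and> (\<exists>z. s \<in> paths z (int n) \<and> \<bar>x - z\<bar> = 1)" by blast
next
  assume "q = (x, int n + 1) \<and> (\<exists>z. s \<in> paths z (int n) \<and> \<bar>x - z\<bar> = 1)"
  then obtain z where q: "q = (x, int n + 1)" and path: "s \<in> paths z (int n)" and "\<bar>x - z\<bar> = 1"
    by blast
  moreover have "last s = (z, int n)"
    using path by (rule paths_last)
  ultimately show "s @ [q] \<in> paths x (int (Suc n))"
    using assms by (auto simp: paths_def checker_path_snoc nth_append abs_if split: if_splits)
qed

lemma paths_one: "paths x 1 = (if x = 1 then {[(0, 0), (1, 1)]} else {})"
proof -
  have "s \<in> paths x 1 \<longleftrightarrow> x = 1 \<and> s = [(0, 0), (1, 1)]" for s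
  proof
    assume "s \<in> paths x 1"
    then have "length s = 2" "s ! 0 = (0, 0)" "s ! 1 = (1, 1)" "x = 1"
      by (auto simp: paths_def)
    then show "x = 1 \<and> s = [(0, 0), (1, 1)]"
      by (cases s; cases "tl s") auto
  qed (auto simp: paths_def checker_path_def less_Suc_eq)
  then show ?thesis by auto
qed

lemma paths_predecessor:
  assumes "s \<in> paths x (int n)" "n \<ge> 1"
  shows "\<bar>fst (s ! (n - 1)) - x\<bar> = 1" and "snd (s ! (n - 1)) = int n - 1"
proof -
  have "Suc (n - 1) < length s" "checker_path s" "s ! n = (x, int n)"
    using assms by (auto simp: paths_def)
  then have "(fst (s ! Suc (n - 1)) - fst (s ! (n - 1)), snd (s ! Suc (n - 1)) - snd (s ! (n - 1)))
      \<in> {(1, 1), (-1, 1)}"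
    unfolding checker_path_def by blast
  then show "\<bar>fst (s ! (n - 1)) - x\<bar> = 1" and "snd (s ! (n - 1)) = int n - 1"
    using \<open>s ! n = (x, int n)\<close> assms(2) by auto
qed

lemma paths_Suc_from_eq_image:
  assumes "n \<ge> 1" "\<bar>d\<bar> = 1"
  shows "{s \<in> paths x (int (Suc n)). fst (s ! n) = x + d} =
    (\<lambda>s. s @ [(x, int n + 1)]) ` paths (x + d) (int n)"
proof (intro set_eqI iffI)
  fix s' assume s': "s' \<in> {s \<in> paths x (int (Suc n)). fst (s ! n) = x + d}"
  then have "length s' = Suc n + 1" by (simp add: paths_def)
  then obtain s q where sq: "s' = s @ [q]" and len: "length s = Suc n"
    by (cases s' rule: rev_exhaust) auto
  then obtain z where q: "q = (x, int n + 1)" and s: "s \<in> paths z (int n)"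
    using s' snoc_in_paths_iff[OF assms(1)] by auto
  have "s ! n = last s" using len by (subst last_conv_nth) auto
  then have "z = x + d"
    using s' sq len paths_last[OF s] by (simp add: nth_append)
  then show "s' \<in> (\<lambda>s. s @ [(x, int n + 1)]) ` paths (x + d) (int n)"
    using sq q s by blast
next
  fix s' assume "s' \<in> (\<lambda>s. s @ [(x, int n + 1)]) ` paths (x + d) (int n)"
  then obtain s where s': "s' = s @ [(x, int n + 1)]" and s: "s \<in> paths (x + d) (int n)" by blast
  then have "s' \<in> paths x (int (Suc n))" using snoc_in_paths_iff[OF assms(1)] assms(2) by auto
  moreover have "s' ! n = (x + d, int n)" using s s' by (auto simp: paths_def nth_append)
  ultimately show "s' \<in> {s \<in> paths x (int (Suc n)). fst (s ! n) = x + d}" by simp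
qed

lemma paths_split_predecessor:
  assumes "n \<ge> 1" "\<bar>d\<bar> = 1"
  shows "paths x (int n) = {s \<in> paths x (int n). fst (s ! (n - 1)) = x + d}
                        \<union> {s \<in> paths x (int n). fst (s ! (n - 1)) = x - d}"
proof -
  have "fst (s ! (n - 1)) = x + d \<or> fst (s ! (n - 1)) = x - d" if "s \<in> paths x (int n)" for s
    using paths_predecessor(1)[OF that assms(1)] assms(2) by linarith
  then show ?thesis by blast
qed

lemma finite_paths: "n \<ge> 1 \<Longrightarrow> finite (paths x (int n))"
proof (induction n arbitrary: x rule: nat_induct_at_least)
  case base
  then show ?case by (simp add: paths_one)
next
  case (Suc n)
  then show ?case
    using paths_split_predecessor[of "Suc n" 1 x]
      paths_Suc_from_eq_image[OF Suc.hyps, of 1 x] paths_Suc_from_eq_image[OF Suc.hyps, of "-1" x]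
    by simp
qed

lemma turns_snoc:
  "turns (s @ [q]) = turns s + (if is_turn (s @ [q]) (length s - 1) then 1 else 0)"
proof -
  have "is_turn (s @ [q]) k \<longleftrightarrow> is_turn s k \<or> k = length s - 1 \<and> is_turn (s @ [q]) k" for k
    by (cases "Suc k < length s") (auto simp: is_turn_def nth_append)
  then have turns_eq: "{k. is_turn (s @ [q]) k} =
      {k. is_turn s k} \<union> (if is_turn (s @ [q]) (length s - 1) then {length s - 1} else {})"
    by auto
  have "finite {k. is_turn s k}"
    by (rule finite_subset[of _ "{..<length s}"]) (auto simp: is_turn_def)
  moreover have "length s - 1 \<notin> {k. is_turn s k}"
    by (auto simp: is_turn_def)
  ultimately show ?thesis
    unfolding turns_def turns_eq by simp
qed

lemma is_turn_snoc_iff: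
  assumes s: "s \<in> paths z (int n)" and "n \<ge> 1" "\<bar>x - z\<bar> = 1"
  shows "is_turn (s @ [(x, int n + 1)]) n \<longleftrightarrow> fst (s ! (n - 1)) = x"
proof -
  have len: "length s = Suc n" and end_pt: "s ! n = (z, int n)"
    using s by (auto simp: paths_def)
  have "is_turn (s @ [(x, int n + 1)]) n \<longleftrightarrow> (x - z) * (fst (s ! (n - 1)) - z) = 1"
    using len end_pt paths_predecessor(2)[OF s \<open>n \<ge> 1\<close>] \<open>n \<ge> 1\<close>
    by (auto simp: is_turn_def nth_append)
  also have "\<dots> \<longleftrightarrow> fst (s ! (n - 1)) = x"
  proof -
    have "x = z + 1 \<or> x = z - 1" "fst (s ! (n - 1)) = z + 1 \<or> fst (s ! (n - 1)) = z - 1"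
      using paths_predecessor(1)[OF s \<open>n \<ge> 1\<close>] \<open>\<bar>x - z\<bar> = 1\<close> by linarith+
    then show ?thesis by auto
  qed
  finally show ?thesis .
qed

definition path_weight :: "field \<Rightarrow> point list \<Rightarrow> complex" where
  "path_weight u s =
     (- \<i>) ^ turns s * complex_of_real (\<Prod>k < length s - 1. edge_val u (s ! k) (s ! Suc k))"

definition weight_from :: "field \<Rightarrow> int \<Rightarrow> int \<Rightarrow> nat \<Rightarrow> complex" where
  "weight_from u d x n = (\<Sum>s \<in> {s \<in> paths x (int n). fst (s ! (n - 1)) = x + d}. path_weight u s)"

lemma path_weight_snoc:
  assumes s: "s \<in> paths z (int n)" and "n \<ge> 1" "\<bar>x - z\<bar> = 1"
  shows "path_weight u (s @ [(x, int n + 1)]) =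
    (if fst (s ! (n - 1)) = x then - \<i> else 1) * complex_of_real (edge_val u (z, int n) (x, int n + 1))
      * path_weight u s"
proof -
  have len: "length s = Suc n" and end_pt: "s ! n = (z, int n)"
    using s by (auto simp: paths_def)
  let ?s' = "s @ [(x, int n + 1)]"
  have "(\<Prod>k < length ?s' - 1. edge_val u (?s' ! k) (?s' ! Suc k))
      = (\<Prod>k < length s - 1. edge_val u (s ! k) (s ! Suc k)) * edge_val u (z, int n) (x, int n + 1)"
    using len end_pt by (auto simp: nth_append intro!: prod.cong)
  then show ?thesis
    using turns_snoc[of s "(x, int n + 1)"] is_turn_snoc_iff[OF assms] len
    by (simp add: path_weight_def power_add)
qed

lemma sum_paths_split_predecessor:
  assumes "n \<ge> 1" "\<bar>d\<bar> = 1"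
  shows "(\<Sum>s \<in> paths x (int n). f s) =
    (\<Sum>s \<in> {s \<in> paths x (int n). fst (s ! (n - 1)) = x + d}. f s)
      + (\<Sum>s \<in> {s \<in> paths x (int n). fst (s ! (n - 1)) = x - d}. f s)"
  using assms finite_paths[OF assms(1)]
  by (subst paths_split_predecessor[OF assms]) (auto intro: sum.union_disjoint)

lemma weight_from_Suc:
  assumes "n \<ge> 1" "\<bar>d\<bar> = 1"
  shows "weight_from u d x (Suc n) = complex_of_real (edge_val u (x + d, int n) (x, int n + 1))
    * (weight_from u d (x + d) n - \<i> * weight_from u (- d) (x + d) n)"
proof -
  let ?e = "complex_of_real (edge_val u (x + d, int n) (x, int n + 1))"
  let ?ext = "\<lambda>s. s @ [(x, int n + 1)]"
  let ?from = "\<lambda>y. {s \<in> paths (x + d) (int n). fst (s ! (n - 1)) = y}"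
  have ext_weight: "path_weight u (?ext s) = (if y = x then - \<i> else 1) * ?e * path_weight u s"
    if "s \<in> ?from y" for s y
    using that path_weight_snoc[of s "x + d" n x u] assms by auto
  have "weight_from u d x (Suc n) = (\<Sum>s \<in> ?ext ` paths (x + d) (int n). path_weight u s)"
    unfolding weight_from_def paths_Suc_from_eq_image[OF assms, symmetric] by simp
  also have "\<dots> = (\<Sum>s \<in> paths (x + d) (int n). path_weight u (?ext s))"
    by (simp add: sum.reindex inj_on_def)
  also have "\<dots> = (\<Sum>s \<in> ?from (x + d + d). path_weight u (?ext s))
      + (\<Sum>s \<in> ?from x. path_weight u (?ext s))"
    using sum_paths_split_predecessor[OF assms, where x = "x + d"] by simp
  also have "\<dots> = ?e * weight_from u d (x + d) n - \<i> * ?e * weight_from u (- d) (x + d) n"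
    using assms(2) by (simp add: ext_weight weight_from_def sum_distrib_left sum_negf)
  finally show ?thesis by (simp add: algebra_simps)
qed

lemma weight_from_one:
  "weight_from u d x 1 = (if x = 1 \<and> d = -1 then complex_of_real (edge_val u (0, 0) (1, 1)) else 0)"
proof -
  have "{k. is_turn [(0, 0), (1, 1)] k} = {}"
    by (auto simp: is_turn_def)
  then have "turns [(0, 0), (1, 1)] = 0"
    by (simp add: turns_def)
  then have "path_weight u [(0, 0), (1, 1)] = complex_of_real (edge_val u (0, 0) (1, 1))"
    by (simp add: path_weight_def)
  moreover have "{s \<in> paths x 1. fst (s ! 0) = x + d} =
      (if x = 1 \<and> d = -1 then {[(0, 0), (1, 1)]} else {})"
    using paths_one[of x] by auto
  ultimately show ?thesis
    by (simp add: weight_from_def)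
qed

lemma weight_from_Re_Im:
  assumes "n \<ge> 1"
  shows "Re (weight_from u 1 x n) = 0 \<and> Im (weight_from u (-1) x n) = 0"
  using assms
proof (induction n arbitrary: x rule: nat_induct_at_least)
  case base
  show ?case using weight_from_one[of u 1 x] weight_from_one[of u "-1" x] by simp
next
  case (Suc n)
  then show ?case
    using weight_from_Suc[OF Suc.hyps, of 1 u x] weight_from_Suc[OF Suc.hyps, of "-1" u x]
    by simp
qed

lemma amp_eq_weight_from:
  assumes "n \<ge> 1"
  shows "amp x (int n) u =
    complex_of_real (2 powr ((1 - real n) / 2)) * \<i> * (weight_from u 1 x n + weight_from u (-1) x n)"
proof -
  have "amp x (int n) u = complex_of_real (2 powr ((1 - real n) / 2)) * \<i> *
      (\<Sum>s \<in> paths x (int n). path_weight u s)"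
    unfolding amp_def path_weight_def by (auto simp: paths_def intro!: sum.cong)
  moreover have "(\<Sum>s \<in> paths x (int n). path_weight u s) = weight_from u 1 x n + weight_from u (-1) x n"
    using sum_paths_split_predecessor[OF assms, where d = 1] by (simp add: weight_from_def)
  ultimately show ?thesis by simp
qed

lemma a1_eq_weight_from:
  "n \<ge> 1 \<Longrightarrow> a1 x (int n) u = - (2 powr ((1 - real n) / 2) * Im (weight_from u 1 x n))"
  using weight_from_Re_Im[of n u x] by (simp add: a1_def amp_eq_weight_from)

lemma a2_eq_weight_from:
  "n \<ge> 1 \<Longrightarrow> a2 x (int n) u = 2 powr ((1 - real n) / 2) * Re (weight_from u (-1) x n)"
  using weight_from_Re_Im[of n u x] by (simp add: a2_def amp_eq_weight_from)

lemma powr_half_Suc: "(2::real) powr ((1 - real (Suc n)) / 2) = 2 powr ((1 - real n) / 2) / sqrt 2"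
proof -
  have "(1 - real (Suc n)) / 2 = (1 - real n) / 2 - 1 / 2" by (simp add: field_simps)
  then show ?thesis by (simp add: powr_diff powr_half_sqrt)
qed

lemma a1_Suc:
  assumes "t \<ge> 1"
  shows "a1 x (t + 1) u = edge_val u (x + 1, t) (x, t + 1) / sqrt 2 * (a1 (x + 1) t u + a2 (x + 1) t u)"
proof -
  obtain n where t: "t = int n" and n: "n \<ge> 1"
    using assms by (cases t) auto
  define c where "c = (2::real) powr ((1 - real n) / 2)"
  have "a1 x (t + 1) u = - (c / sqrt 2 * Im (weight_from u 1 x (Suc n)))"
    using a1_eq_weight_from[of "Suc n" x u, unfolded powr_half_Suc, folded c_def] t by (simp add: add.commute)
  also have "\<dots> = - (c / sqrt 2 * edge_val u (x + 1, t) (x, t + 1)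
      * (Im (weight_from u 1 (x + 1) n) - Re (weight_from u (-1) (x + 1) n)))"
    using weight_from_Suc[OF n, of 1 u x] t by simp
  also have "\<dots> = edge_val u (x + 1, t) (x, t + 1) / sqrt 2 * (a1 (x + 1) t u + a2 (x + 1) t u)"
    using a1_eq_weight_from[OF n] a2_eq_weight_from[OF n] t by (simp add: c_def field_simps)
  finally show ?thesis .
qed

lemma a2_Suc:
  assumes "t \<ge> 1"
  shows "a2 x (t + 1) u = edge_val u (x - 1, t) (x, t + 1) / sqrt 2 * (a2 (x - 1) t u - a1 (x - 1) t u)"
proof -
  obtain n where t: "t = int n" and n: "n \<ge> 1"
    using assms by (cases t) auto
  define c where "c = (2::real) powr ((1 - real n) / 2)"
  have "a2 x (t + 1) u = c / sqrt 2 * Re (weight_from u (-1) x (Suc n))"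
    using a2_eq_weight_from[of "Suc n" x u, unfolded powr_half_Suc, folded c_def] t by (simp add: add.commute)
  also have "\<dots> = c / sqrt 2 * edge_val u (x - 1, t) (x, t + 1)
      * (Re (weight_from u (-1) (x - 1) n) + Im (weight_from u 1 (x - 1) n))"
    using weight_from_Suc[OF n, of "-1" u x] t by simp
  also have "\<dots> = edge_val u (x - 1, t) (x, t + 1) / sqrt 2 * (a2 (x - 1) t u - a1 (x - 1) t u)"
    using a1_eq_weight_from[OF n] a2_eq_weight_from[OF n] t by (simp add: c_def field_simps)
  finally show ?thesis .
qed

lemma a1_a2_one:
  shows "a1 x 1 u = 0" and "x \<noteq> 1 \<Longrightarrow> a2 x 1 u = 0"
  using a1_eq_weight_from[of 1 x u] a2_eq_weight_from[of 1 x u]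
    weight_from_one[of u 1 x] weight_from_one[of u "-1" x]
  by simp_all

lemma u0_half_integer:
  "u0 (real_of_int a + 1 / 2, real_of_int b + 1 / 2) = (if even a \<and> even b then -1 else 1)"
  by (auto simp: u0_def)

lemma edge_val_u0:
  shows "edge_val u0 (x + 1, t) (x, t + 1) = (if even x \<and> even t then -1 else 1)"
    and "edge_val u0 (x - 1, t) (x, t + 1) = (if odd x \<and> even t then -1 else 1)"
  using u0_half_integer[of x t] u0_half_integer[of "x - 1" t]
  by (simp_all add: edge_val_def field_simps)

lemma u0_two_steps:
  assumes "odd y" "odd s" "s \<ge> 1"
  shows "a1 y (s + 2) u0 = (a1 (y + 2) s u0 + a2 (y + 2) s u0 + a2 y s u0 - a1 y s u0) / 2"
    and "a2 y (s + 2) u0 = (a1 y s u0 + a2 y s u0 + a1 (y - 2) s u0 - a2 (y - 2) s u0) / 2"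
proof -
  have parity: "odd (y + 2)" "even (y + 1)" "even (y - 1)" "even (s + 1)" "odd (y - 2)"
    using assms by presburger+
  have sqrt2: "sqrt 2 * sqrt 2 = (2::real)" by simp
  have A: "a1 y (s + 2) u0 = (a1 (y + 1) (s + 1) u0 + a2 (y + 1) (s + 1) u0) / sqrt 2"
    using a1_Suc[of "s + 1" y u0] edge_val_u0(1)[of y "s + 1"] assms parity by (simp add: add.assoc)
  have B: "a1 (y + 1) (s + 1) u0 = (a1 (y + 2) s u0 + a2 (y + 2) s u0) / sqrt 2"
    using a1_Suc[of s "y + 1" u0] edge_val_u0(1)[of "y + 1" s] assms parity by (simp add: add.assoc)
  have C: "a2 (y + 1) (s + 1) u0 = (a2 y s u0 - a1 y s u0) / sqrt 2"
    using a2_Suc[of s "y + 1" u0] edge_val_u0(2)[of "y + 1" s] assms parity by simp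
  show "a1 y (s + 2) u0 = (a1 (y + 2) s u0 + a2 (y + 2) s u0 + a2 y s u0 - a1 y s u0) / 2"
    unfolding A B C by (simp add: field_simps sqrt2)
  have D: "a2 y (s + 2) u0 = - (a2 (y - 1) (s + 1) u0 - a1 (y - 1) (s + 1) u0) / sqrt 2"
    using a2_Suc[of "s + 1" y u0] edge_val_u0(2)[of y "s + 1"] assms parity by (simp add: add.assoc)
  have E: "a1 (y - 1) (s + 1) u0 = (a1 y s u0 + a2 y s u0) / sqrt 2"
    using a1_Suc[of s "y - 1" u0] edge_val_u0(1)[of "y - 1" s] assms parity by simp
  have F: "a2 (y - 1) (s + 1) u0 = (a2 (y - 2) s u0 - a1 (y - 2) s u0) / sqrt 2"
    using a2_Suc[of s "y - 1" u0] edge_val_u0(2)[of "y - 1" s] assms parity by (simp add: algebra_simps)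
  show "a2 y (s + 2) u0 = (a1 y s u0 + a2 y s u0 + a1 (y - 2) s u0 - a2 (y - 2) s u0) / 2"
    unfolding D E F by (simp add: field_simps sqrt2)
qed

lemma u0_invariant:
  fixes m :: nat
  defines "s \<equiv> 2 * int m + 1"
  assumes "odd y"
  shows "((y + s) mod 4 = 0 \<longrightarrow> a1 y s u0 = a2 y s u0)
       \<and> ((y + s) mod 4 = 2 \<longrightarrow> a1 y s u0 = a1 (y + 2) s u0)"
  using assms(2) unfolding s_def
proof (induction m arbitrary: y)
  case 0
  then have "(y + 1) mod 4 = 0 \<Longrightarrow> y \<noteq> 1" by auto
  then show ?case by (simp add: a1_a2_one)
next
  case (Suc m)
  define s where "s = 2 * int m + 1"
  have s: "odd s" "s \<ge> 1" "2 * int (Suc m) + 1 = s + 2"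
    unfolding s_def by auto
  have IH_diag: "a1 z s u0 = a2 z s u0" if "odd z" "(z + s) mod 4 = 0" for z
    using Suc.IH[OF that(1)] that(2) unfolding s_def by blast
  have IH_pair: "a1 z s u0 = a1 (z + 2) s u0" if "odd z" "(z + s) mod 4 = 2" for z
    using Suc.IH[OF that(1)] that(2) unfolding s_def by blast
  have odd: "odd (y + 2)" "odd (y - 2)" "odd (y + 4)"
    using Suc.prems by presburger+
  show ?case
    unfolding s(3)
  proof (intro conjI impI)
    assume "(y + (s + 2)) mod 4 = 0"
    then have "(y + s) mod 4 = 2" "(y + 2 + s) mod 4 = 0" "(y - 2 + s) mod 4 = 0"
      by presburger+
    then show "a1 y (s + 2) u0 = a2 y (s + 2) u0"
      using u0_two_steps[OF Suc.prems s(1,2)] IH_pair[OF Suc.prems] IH_diag[OF odd(1)] IH_diag[OF odd(2)]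
      by simp
  next
    assume "(y + (s + 2)) mod 4 = 2"
    then have "(y + s) mod 4 = 0" "(y + 2 + s) mod 4 = 2" "(y + 4 + s) mod 4 = 0"
      by presburger+
    then show "a1 y (s + 2) u0 = a1 (y + 2) (s + 2) u0"
      using u0_two_steps(1)[OF Suc.prems s(1,2)] u0_two_steps(1)[OF odd(1) s(1,2)]
        IH_diag[OF Suc.prems] IH_pair[OF odd(1)] IH_diag[OF odd(3)]
      by (simp add: add.assoc)
  qed
qed

theorem proposition11:
  fixes x t :: int
  assumes "even (x + t)" and "t > 1"
  shows "b1 x t = (b1 (x + 1) (t - 1) + b2 (x + 1) (t - 1)) / 2
       \<and> b2 x t = (3 * b1 (x - 1) (t - 1) - b2 (x - 1) (t - 1)) / 2"
proof -
  define y where "y = 2 * x - 1"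
  define s where "s = 2 * int (nat (t - 2)) + 1"
  have s: "s = 2 * t - 3" "odd s" "s \<ge> 1" and y: "odd y" "odd (y - 2)"
    using assms(2) unfolding s_def y_def by auto
  have "(y + s) mod 4 = 0" "(y - 2 + s) mod 4 = 2"
    using assms(1) unfolding s(1) y_def by presburger+
  then have diag: "a1 y s u0 = a2 y s u0" and pair: "a1 (y - 2) s u0 = a1 y s u0"
    using u0_invariant[of "y - 2" "nat (t - 2)"] u0_invariant[of y "nat (t - 2)"] y
    unfolding s_def by auto
  have "b1 x t = a1 y (s + 2) u0" "b2 x t = a2 y (s + 2) u0"
    "b1 (x + 1) (t - 1) = a1 (y + 2) s u0" "b2 (x + 1) (t - 1) = a2 (y + 2) s u0"
    "b1 (x - 1) (t - 1) = a1 (y - 2) s u0" "b2 (x - 1) (t - 1) = a2 (y - 2) s u0"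
    using assms unfolding b1_def b2_def y_def s(1) by (auto simp: algebra_simps)
  then show ?thesis
    using u0_two_steps[OF y(1) s(2,3)] diag pair by simp
qed

end
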